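(* Let $\mathcal{H}$ be a complex separable Hilbert space and let $A$ be a bounded selfadjoint operator on $\mathcal{H}$. Then $A$ is an effect (i.e. $\mathbb{O}\le A\le I$) if and only if $$0\le \|A\|+\|I-A\|-1\le 1-\bigl|\,\|A\|-\|I-A\|\,\bigr|.$$
   Context: $\|\cdot\|$ denotes the operator norm, $I$ the identity and $\mathbb{O}$ the zero operator on $\mathcal{H}$; $A\le B$ means $\langle\varphi,A\varphi\rangle\le\langle\varphi,B\varphi\rangle$ for all $\varphi\in\mathcal{H}$. *)

theory Defs
  imports "HOL-Analysis.Analysis" "HOL-Library.Complex_Order"
begin

class complex_inner_space = real_normed_vector +
  fixes scaleC :: "complex \<Rightarrow> 'a \<Rightarrow> 'a"
    and cinner :: "'a \<Rightarrow> 'a \<Rightarrow> complex"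
  assumes scaleC_add_right: "scaleC a (x + y) = scaleC a x + scaleC a y"
    and scaleC_add_left: "scaleC (a + b) x = scaleC a x + scaleC b x"
    and scaleC_scaleC: "scaleC a (scaleC b x) = scaleC (a * b) x"
    and scaleC_one: "scaleC 1 x = x"
    and scaleR_scaleC: "scaleR r x = scaleC (complex_of_real r) x"
    and cinner_commute: "cinner x y = cnj (cinner y x)"
    and cinner_add_right: "cinner x (y + z) = cinner x y + cinner x z"
    and cinner_scaleC_right: "cinner x (scaleC c y) = c * cinner x y"
    and cinner_ge_zero: "0 \<le> cinner x x"
    and cinner_eq_zero_iff: "cinner x x = 0 \<longleftrightarrow> x = 0"
    and norm_eq_sqrt_cinner: "norm x = sqrt (Re (cinner x x))"

class chilbert_space = complex_inner_space + complete_space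

definition bounded_clinear_op :: "('a::complex_inner_space \<Rightarrow> 'a) \<Rightarrow> bool" where
  "bounded_clinear_op A \<longleftrightarrow>
     (\<forall>x y. A (x + y) = A x + A y) \<and>
     (\<forall>c x. A (scaleC c x) = scaleC c (A x)) \<and>
     (\<exists>K. \<forall>x. norm (A x) \<le> norm x * K)"

definition selfadjoint :: "('a::complex_inner_space \<Rightarrow> 'a) \<Rightarrow> bool" where
  "selfadjoint A \<longleftrightarrow> (\<forall>x y. cinner (A x) y = cinner x (A y))"

definition loewner_le :: "('a::complex_inner_space \<Rightarrow> 'a) \<Rightarrow> ('a \<Rightarrow> 'a) \<Rightarrow> bool" where
  "loewner_le A B \<longleftrightarrow> (\<forall>\<phi>. cinner \<phi> (A \<phi>) \<le> cinner \<phi> (B \<phi>))"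

definition effect :: "('a::complex_inner_space \<Rightarrow> 'a) \<Rightarrow> bool" where
  "effect A \<longleftrightarrow> loewner_le (\<lambda>_. 0) A \<and> loewner_le A id"

definition separable_space :: "'a::metric_space itself \<Rightarrow> bool" where
  "separable_space _ \<longleftrightarrow> (\<exists>D::'a set. countable D \<and> closure D = UNIV)"


text \<open>Sanity check: the class is inhabited (complex numbers, <x,y> = cnj x * y).\<close>
instantiation complex :: chilbert_space
begin
definition scaleC_complex :: "complex \<Rightarrow> complex \<Rightarrow> complex" where "scaleC_complex a x = a * x"
definition cinner_complex :: "complex \<Rightarrow> complex \<Rightarrow> complex" where "cinner_complex x y = cnj x * y"
instance
proof
  fix x :: complex
  show "0 \<le> cinner x x" by (simp add: cinner_complex_def less_eq_complex_def)
  show "norm x = sqrt (Re (cinner x x))"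
    by (simp add: cinner_complex_def cmod_def power2_eq_square)
qed (auto simp: scaleC_complex_def cinner_complex_def algebra_simps scaleR_conv_of_real
        complex_eq_iff)
end

end

theory Submission
  imports Defs
begin

text \<open>For selfadjoint \<open>T\<close> with \<open>\<O> \<le> T \<le> I\<close>, the Cauchy-Schwarz inequality for the positive
form \<open>\<langle>x, T y\<rangle>\<close> gives \<open>\<parallel>T x\<parallel>\<^sup>4 \<le> \<langle>x,Tx\<rangle>\<langle>Tx,T\<^sup>2x\<rangle> \<le> \<parallel>x\<parallel>\<^sup>2\<parallel>Tx\<parallel>\<^sup>2\<close>, so \<open>\<parallel>T\<parallel> \<le> 1\<close>; conversely
\<open>\<parallel>T\<parallel> \<le> 1\<close> gives \<open>\<langle>z,Tz\<rangle> \<le> \<parallel>z\<parallel>\<^sup>2\<close>. Applying both to \<open>A\<close> and \<open>I - A\<close> shows that \<open>A\<close> is an effect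
iff \<open>\<parallel>A\<parallel> \<le> 1\<close> and \<open>\<parallel>I - A\<parallel> \<le> 1\<close>. Since \<open>\<parallel>A\<parallel> + \<parallel>I - A\<parallel> \<ge> \<parallel>I\<parallel> = 1\<close>, the latter is exactly
the stated pair of inequalities.\<close>

lemma cinner_add_left:
  fixes x :: "'a::complex_inner_space"
  shows "cinner (x + y) z = cinner x z + cinner y z"
  by (metis cinner_commute cinner_add_right complex_cnj_add)

lemma cinner_scaleC_left:
  fixes x :: "'a::complex_inner_space"
  shows "cinner (scaleC c x) y = cnj c * cinner x y"
  by (metis cinner_commute cinner_scaleC_right complex_cnj_mult)

lemma cinner_zero_right:
  fixes x :: "'a::complex_inner_space"
  shows "cinner x 0 = 0"
  using cinner_add_right[of x 0 0] by simp

lemma scaleC_minus1_left: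
  fixes x :: "'a::complex_inner_space"
  shows "scaleC (-1) x = - x"
  by (metis of_real_1 of_real_minus scaleR_minus1_left scaleR_scaleC)

lemma cinner_diff_right:
  fixes x :: "'a::complex_inner_space"
  shows "cinner x (y - z) = cinner x y - cinner x z"
  using cinner_add_right[of x y "scaleC (-1) z"] cinner_scaleC_right[of x "-1" z]
  by (simp add: scaleC_minus1_left)

lemma cinner_diff_left:
  fixes x :: "'a::complex_inner_space"
  shows "cinner (y - z) x = cinner y x - cinner z x"
  by (metis cinner_commute cinner_diff_right complex_cnj_diff)

lemma scaleC_diff_right:
  fixes x :: "'a::complex_inner_space"
  shows "scaleC c (x - y) = scaleC c x - scaleC c y"
  by (metis add_diff_cancel diff_add_cancel scaleC_add_right)

lemma Im_cinner_self [simp]: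
  fixes x :: "'a::complex_inner_space"
  shows "Im (cinner x x) = 0"
  using cinner_ge_zero[of x] by (simp add: less_eq_complex_def)

lemma power2_norm_eq_Re_cinner:
  fixes x :: "'a::complex_inner_space"
  shows "(norm x)\<^sup>2 = Re (cinner x x)"
  using cinner_ge_zero[of x] by (simp add: norm_eq_sqrt_cinner less_eq_complex_def)

lemma cinner_self_eq_of_real:
  fixes x :: "'a::complex_inner_space"
  shows "cinner x x = of_real ((norm x)\<^sup>2)"
  by (simp add: complex_eq_iff power2_norm_eq_Re_cinner)

definition clinear_op :: "('a::complex_inner_space \<Rightarrow> 'a) \<Rightarrow> bool" where
  "clinear_op T \<longleftrightarrow> (\<forall>x y. T (x + y) = T x + T y) \<and> (\<forall>c x. T (scaleC c x) = scaleC c (T x))"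

lemma clinear_op_id: "clinear_op (\<lambda>x. x)"
  by (simp add: clinear_op_def)

lemma clinear_op_diff:
  "clinear_op S \<Longrightarrow> clinear_op T \<Longrightarrow> clinear_op (\<lambda>x. S x - T x)"
  by (simp add: clinear_op_def scaleC_diff_right algebra_simps)

lemma selfadjoint_id: "selfadjoint (\<lambda>x. x)"
  by (simp add: selfadjoint_def)

lemma selfadjoint_diff:
  "selfadjoint S \<Longrightarrow> selfadjoint T \<Longrightarrow> selfadjoint (\<lambda>x. S x - T x)"
  by (simp add: selfadjoint_def cinner_diff_left cinner_diff_right)

lemma selfadjoint_Im_cinner:
  assumes "selfadjoint T"
  shows "Im (cinner z (T z)) = 0"
proof -
  have "cinner z (T z) = cnj (cinner z (T z))"
    using assms cinner_commute[of "T z" z] by (simp add: selfadjoint_def)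
  then show ?thesis
    by (metis cnj.simps(2) neg_equal_zero)
qed

lemma bounded_clinear_op_imp_bounded_linear:
  assumes "bounded_clinear_op T"
  shows "bounded_linear T"
proof -
  obtain K where "\<And>x y. T (x + y) = T x + T y" "\<And>c x. T (scaleC c x) = scaleC c (T x)"
    "\<And>x. norm (T x) \<le> norm x * K"
    using assms unfolding bounded_clinear_op_def by blast
  then show ?thesis
    by (intro bounded_linear_intro) (auto simp: scaleR_scaleC)
qed

lemma nonneg_quadratic_imp_le:
  fixes a b c :: real
  assumes nonneg: "\<And>t. 0 \<le> a - 2 * t * c + t\<^sup>2 * c * b" and "0 \<le> b" "0 < c"
  shows "c \<le> a * b"
proof (cases "b = 0")
  case True
  have "0 \<le> a - 2 * ((a + 1) / (2 * c)) * c"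
    using nonneg[of "(a + 1) / (2 * c)"] True by simp
  with \<open>0 < c\<close> show ?thesis by (simp add: field_simps)
next
  case False
  with \<open>0 \<le> b\<close> have "0 < b" by simp
  have "0 \<le> b * (a - 2 * (1 / b) * c + (1 / b)\<^sup>2 * c * b)"
    using nonneg[of "1 / b"] \<open>0 < b\<close> by simp
  also have "\<dots> = a * b - c"
    using \<open>0 < b\<close> by (simp add: field_simps power2_eq_square)
  finally show ?thesis by simp
qed

lemma positive_selfadjoint_Cauchy_Schwarz:
  fixes T :: "'a::complex_inner_space \<Rightarrow> 'a"
  assumes "clinear_op T" and "selfadjoint T"
    and pos: "\<And>z. 0 \<le> Re (cinner z (T z))"
  shows "(cmod (cinner y (T x)))\<^sup>2 \<le> Re (cinner x (T x)) * Re (cinner y (T y))"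
proof -
  define w where "w = cinner x (T y)"
  have yx: "cinner y (T x) = cnj w"
    using assms(2) cinner_commute[of y "T x"] by (simp add: selfadjoint_def w_def)
  have expand: "cinner (x + scaleC s y) (T (x + scaleC s y)) =
      cinner x (T x) + s * w + cnj s * cnj w + cnj s * s * cinner y (T y)" for s
    using assms(1)
    by (simp add: clinear_op_def cinner_add_left cinner_add_right cinner_scaleC_left
        cinner_scaleC_right yx w_def algebra_simps)
  have w_sq: "w * cnj w = of_real ((cmod w)\<^sup>2)" "cnj w * w = of_real ((cmod w)\<^sup>2)"
    using complex_norm_square[of w] by (simp_all add: mult.commute)
  \<comment> \<open>The form at \<open>x - t \<langle>x, T y\<rangle>\<^sup>* y\<close> is a real quadratic polynomial in \<open>t\<close>.\<close>
  have "0 \<le> Re (cinner x (T x)) - 2 * t * (cmod w)\<^sup>2 + t\<^sup>2 * (cmod w)\<^sup>2 * Re (cinner y (T y))"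
    for t
  proof -
    define s where "s = - (of_real t * cnj w)"
    have "s * w = - of_real (t * (cmod w)\<^sup>2)" "cnj s * cnj w = - of_real (t * (cmod w)\<^sup>2)"
      and "cnj s * s = of_real (t\<^sup>2 * (cmod w)\<^sup>2)"
      unfolding s_def using w_sq
      by (simp_all add: mult.assoc mult.left_commute[of "cnj w"] power2_eq_square)
    then have "cinner (x + scaleC s y) (T (x + scaleC s y)) =
        cinner x (T x) - 2 * of_real (t * (cmod w)\<^sup>2)
        + of_real (t\<^sup>2 * (cmod w)\<^sup>2) * cinner y (T y)"
      by (simp only: expand) simp
    then show ?thesis
      using pos[of "x + scaleC s y"] by (simp del: of_real_power)
  qed
  then have "w \<noteq> 0 \<Longrightarrow> (cmod w)\<^sup>2 \<le> Re (cinner x (T x)) * Re (cinner y (T y))"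
    by (intro nonneg_quadratic_imp_le) (simp_all add: pos)
  then show ?thesis
    using yx pos[of x] pos[of y] by (cases "w = 0") simp_all
qed

lemma cmod_cinner_le_norm_mult:
  fixes x :: "'a::complex_inner_space"
  shows "cmod (cinner y x) \<le> norm y * norm x"
proof -
  have "(cmod (cinner y x))\<^sup>2 \<le> Re (cinner x x) * Re (cinner y y)"
    using positive_selfadjoint_Cauchy_Schwarz[OF clinear_op_id selfadjoint_id]
    by (simp add: power2_norm_eq_Re_cinner[symmetric])
  then have "(cmod (cinner y x))\<^sup>2 \<le> (norm y * norm x)\<^sup>2"
    by (simp add: power2_norm_eq_Re_cinner power_mult_distrib mult.commute)
  then show ?thesis
    by (rule power2_le_imp_le) simp
qed

lemma norm_le_if_between_zero_and_identity:
  fixes T :: "'a::complex_inner_space \<Rightarrow> 'a"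
  assumes "clinear_op T" and "selfadjoint T"
    and pos: "\<And>z. 0 \<le> Re (cinner z (T z))"
    and le: "\<And>z. Re (cinner z (T z)) \<le> (norm z)\<^sup>2"
  shows "norm (T x) \<le> norm x"
proof -
  have "((norm (T x))\<^sup>2)\<^sup>2 = (cmod (cinner (T x) (T x)))\<^sup>2"
    by (simp add: cinner_self_eq_of_real del: of_real_power)
  also have "\<dots> \<le> Re (cinner x (T x)) * Re (cinner (T x) (T (T x)))"
    by (rule positive_selfadjoint_Cauchy_Schwarz[OF assms(1,2) pos])
  also have "\<dots> \<le> (norm x)\<^sup>2 * (norm (T x))\<^sup>2"
    by (rule mult_mono[OF le le]) (simp_all add: pos)
  finally have quartic: "(norm (T x))\<^sup>2 * (norm (T x))\<^sup>2 \<le> (norm x)\<^sup>2 * (norm (T x))\<^sup>2"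
    by (simp only: power2_eq_square[of "(norm (T x))\<^sup>2"])
  show ?thesis
  proof (cases "norm (T x) = 0")
    case False
    then have "(norm (T x))\<^sup>2 \<le> (norm x)\<^sup>2"
      using mult_right_le_imp_le[OF quartic] by simp
    then show ?thesis
      by (rule power2_le_imp_le) simp
  qed simp
qed

lemma Re_cinner_le_if_onorm_le_1:
  fixes T :: "'a::complex_inner_space \<Rightarrow> 'a"
  assumes "bounded_linear T" and "onorm T \<le> 1"
  shows "Re (cinner z (T z)) \<le> (norm z)\<^sup>2"
proof -
  have "norm (T z) \<le> onorm T * norm z"
    using assms(1) by (rule onorm)
  also have "\<dots> \<le> norm z"
    using assms(2) onorm_pos_le[OF assms(1)] by (simp add: mult_left_le_one_le)
  finally have T_z: "norm (T z) \<le> norm z" .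
  have "Re (cinner z (T z)) \<le> cmod (cinner z (T z))"
    by (rule complex_Re_le_cmod)
  also have "\<dots> \<le> norm z * norm (T z)"
    by (rule cmod_cinner_le_norm_mult)
  also have "\<dots> \<le> norm z * norm z"
    using T_z by (simp add: mult_left_mono)
  finally show ?thesis
    by (simp add: power2_eq_square)
qed

lemma effect_iff_forms:
  assumes "selfadjoint T"
  shows "effect T \<longleftrightarrow> (\<forall>z. 0 \<le> Re (cinner z (T z)) \<and> Re (cinner z (T z)) \<le> (norm z)\<^sup>2)"
  using selfadjoint_Im_cinner[OF assms]
  by (simp add: effect_def loewner_le_def less_eq_complex_def cinner_zero_right
      power2_norm_eq_Re_cinner) blast

lemma effect_iff_onorm_le_1:
  fixes A :: "'a::complex_inner_space \<Rightarrow> 'a"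
  assumes "bounded_clinear_op A" and "selfadjoint A"
  shows "effect A \<longleftrightarrow> onorm A \<le> 1 \<and> onorm (\<lambda>x. x - A x) \<le> 1"
proof -
  define S where "S = (\<lambda>x. x - A x)"
  have lin_A: "clinear_op A"
    using assms(1) by (simp add: bounded_clinear_op_def clinear_op_def)
  have lin_S: "clinear_op S" and sa_S: "selfadjoint S"
    unfolding S_def
    by (simp_all add: clinear_op_diff[OF clinear_op_id lin_A] selfadjoint_diff[OF selfadjoint_id assms(2)])
  have bl_A: "bounded_linear A"
    using assms(1) by (rule bounded_clinear_op_imp_bounded_linear)
  have bl_S: "bounded_linear S"
    unfolding S_def using bl_A by (intro bounded_linear_sub bounded_linear_ident)
  have form_S: "Re (cinner z (S z)) = (norm z)\<^sup>2 - Re (cinner z (A z))" for z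
    by (simp add: S_def cinner_diff_right power2_norm_eq_Re_cinner)
  have "effect A \<longleftrightarrow> onorm A \<le> 1 \<and> onorm S \<le> 1"
  proof
    assume "effect A"
    then have pos: "0 \<le> Re (cinner z (A z))" and le: "Re (cinner z (A z)) \<le> (norm z)\<^sup>2" for z
      using effect_iff_forms[OF assms(2)] by auto
    have pos_S: "0 \<le> Re (cinner z (S z))" and le_S: "Re (cinner z (S z)) \<le> (norm z)\<^sup>2" for z
      using pos[of z] le[of z] by (simp_all add: form_S)
    have "onorm A \<le> 1"
      by (rule onorm_bound) (simp_all add: norm_le_if_between_zero_and_identity[OF lin_A assms(2) pos le])
    moreover have "onorm S \<le> 1"
      by (rule onorm_bound) (simp_all add: norm_le_if_between_zero_and_identity[OF lin_S sa_S pos_S le_S])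
    ultimately show "onorm A \<le> 1 \<and> onorm S \<le> 1" ..
  next
    assume "onorm A \<le> 1 \<and> onorm S \<le> 1"
    then show "effect A"
      using Re_cinner_le_if_onorm_le_1[OF bl_A] Re_cinner_le_if_onorm_le_1[OF bl_S]
      by (simp add: effect_iff_forms[OF assms(2)] form_S)
  qed
  then show ?thesis
    by (simp add: S_def)
qed

lemma onorm_add_onorm_diff_ge_1:
  fixes A :: "'a::real_normed_vector \<Rightarrow> 'a" and x :: 'a
  assumes "bounded_linear A" and "x \<noteq> 0"
  shows "1 \<le> onorm A + onorm (\<lambda>x. x - A x)"
proof -
  have bl_S: "bounded_linear (\<lambda>x. x - A x)"
    using assms(1) by (intro bounded_linear_sub bounded_linear_ident)
  have "norm x \<le> norm (A x) + norm (x - A x)"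
    using norm_triangle_ineq[of "A x" "x - A x"] by simp
  also have "\<dots> \<le> (onorm A + onorm (\<lambda>x. x - A x)) * norm x"
    using onorm[OF assms(1), of x] onorm[OF bl_S, of x] by (simp add: algebra_simps)
  finally show ?thesis
    using assms(2) by simp
qed

theorem mainTheorem1:
  fixes A :: "'a::chilbert_space \<Rightarrow> 'a"
  assumes "separable_space TYPE('a)"
    and "\<exists>x::'a. x \<noteq> 0"
    and "bounded_clinear_op A"
    and "selfadjoint A"
  shows "effect A \<longleftrightarrow>
    (0 \<le> onorm A + onorm (\<lambda>x. x - A x) - 1 \<and>
     onorm A + onorm (\<lambda>x. x - A x) - 1 \<le> 1 - \<bar>onorm A - onorm (\<lambda>x. x - A x)\<bar>)"
proof -
  obtain x :: 'a where "x \<noteq> 0"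
    using assms(2) by blast
  with bounded_clinear_op_imp_bounded_linear[OF assms(3)]
  have "1 \<le> onorm A + onorm (\<lambda>x. x - A x)"
    by (rule onorm_add_onorm_diff_ge_1)
  then show ?thesis
    using effect_iff_onorm_le_1[OF assms(3,4)] by (auto simp: abs_if)
qed

end
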